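(* Let $x>0$ and $0\le p\le 1$. Then $$W_p(x,1)\le p(1-p)\left(\sqrt{x}-1\right)^2+L(x,1)\le A(x,1).$$ Equivalently (by homogeneity), for all $x,y>0$ and $0\le p\le 1$: $W_p(x,y)\le p(1-p)(\sqrt{x}-\sqrt{y})^2+L(x,y)\le A(x,y)$.
   Context: For $x,y>0$: $A(x,y)=\frac{x+y}{2}$; $L(x,y)=\frac{x-y}{\log x-\log y}$ for $x\ne y$ and $L(x,x)=x$ (logarithmic mean). The Wigner--Yanase--Dyson function is $W_p(x,y)=\frac{p(1-p)(x-y)^2}{(x^p-y^p)(x^{1-p}-y^{1-p})}$ for $x\neq y$, $p\notin\{0,1\}$, with $W_p(x,x)=x$, and for $p\in\{0,1\}$ defined by its limiting value $W_0(x,y)=W_1(x,y)=L(x,y)$. *)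

theory Defs
  imports Complex_Main
begin

definition AM :: "real \<Rightarrow> real \<Rightarrow> real" where
  "AM x y = (x + y) / 2"

definition LM :: "real \<Rightarrow> real \<Rightarrow> real" where
  "LM x y = (if x = y then x else (x - y) / (ln x - ln y))"

text \<open>Wigner--Yanase--Dyson function; for p in {0,1} its limiting value L.\<close>
definition WYD :: "real \<Rightarrow> real \<Rightarrow> real \<Rightarrow> real" where
  "WYD p x y =
    (if p = 0 \<or> p = 1 then LM x y
     else if x = y then x
     else p * (1 - p) * (x - y)^2 / ((x powr p - y powr p) * (x powr (1 - p) - y powr (1 - p))))"

end

theory Submission imports Defs begin

text \<open>
  Write \<open>x = e\<^sup>m\<^sup>+\<^sup>2\<^sup>v\<close>, \<open>y = e\<^sup>m\<^sup>-\<^sup>2\<^sup>v\<close> with \<open>v > 0\<close> and put \<open>w = (2p - 1) v\<close>, so that \<open>p(1 - p) = (v\<^sup>2 - w\<^sup>2) / (4 v\<^sup>2)\<close>.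
  After dividing by \<open>e\<^sup>m\<close> every quantity is hyperbolic: \<open>A = cosh\<^sup>2 v + sinh\<^sup>2 v\<close>,
  \<open>L = sinh v cosh v / v\<close>, \<open>(\<surd>x - \<surd>y)\<^sup>2 = 4 sinh\<^sup>2 v\<close> and
  \<open>W\<^sub>p = 4 p(1 - p) sinh\<^sup>2 v cosh\<^sup>2 v / (sinh\<^sup>2 v - sinh\<^sup>2 w)\<close>.
  The upper bound then reduces to \<open>p(1 - p) \<le> 1/4\<close> and \<open>tanh v \<le> v\<close>. Since
  \<open>cosh\<^sup>2 v - (sinh\<^sup>2 v - sinh\<^sup>2 w) = cosh\<^sup>2 w\<close>, the lower bound reduces to
  \<open>(v\<^sup>2 - w\<^sup>2) sinh v cosh\<^sup>2 w \<le> v cosh v (sinh\<^sup>2 v - sinh\<^sup>2 w)\<close>, an equality at \<open>w = v\<close>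
  whose difference decreases in \<open>w \<in> [0, v]\<close> because \<open>t coth t\<close> is increasing.
\<close>

lemma sinh_le_mult_cosh_real:
  fixes v :: real assumes "0 \<le> v" shows "sinh v \<le> v * cosh v"
proof -
  have "0 * cosh 0 - sinh 0 \<le> v * cosh v - sinh v"
  proof (rule DERIV_nonneg_imp_nondecreasing[OF assms])
    fix t :: real assume "0 \<le> t" "t \<le> v"
    show "\<exists>d. ((\<lambda>t. t * cosh t - sinh t) has_real_derivative d) (at t) \<and> 0 \<le> d"
      by (rule exI[of _ "t * sinh t"]) (auto intro!: derivative_eq_intros simp: \<open>0 \<le> t\<close>)
  qed
  then show ?thesis by simp
qed

lemma le_sinh_mult_cosh_real:
  fixes t :: real assumes "0 \<le> t" shows "t \<le> sinh t * cosh t"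
proof -
  have "2 * t \<le> sinh (2 * t)"
    using real_le_x_sinh[of "2 * t"] assms by (simp add: sinh_def exp_minus)
  then show ?thesis by (simp add: sinh_double)
qed

lemma mult_coth_mono_real:
  fixes v w :: real assumes "0 < w" "w \<le> v"
  shows "w * cosh w * sinh v \<le> v * cosh v * sinh w"
proof -
  have "w * cosh w / sinh w \<le> v * cosh v / sinh v"
  proof (rule DERIV_nonneg_imp_nondecreasing[OF assms(2)])
    fix t :: real assume "w \<le> t" "t \<le> v"
    then have "0 < t" "0 < sinh t" using assms by auto
    have "((\<lambda>t. t * cosh t / sinh t) has_real_derivative (sinh t * cosh t - t) / (sinh t)^2) (at t)"
      using \<open>0 < sinh t\<close> cosh_square_eq[of t]
      by (auto intro!: derivative_eq_intros simp: field_simps power2_eq_square)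
    moreover have "0 \<le> (sinh t * cosh t - t) / (sinh t)^2"
      using le_sinh_mult_cosh_real[of t] \<open>0 < t\<close> by simp
    ultimately show "\<exists>d. ((\<lambda>t. t * cosh t / sinh t) has_real_derivative d) (at t) \<and> 0 \<le> d"
      by blast
  qed
  moreover have "0 < sinh w" "0 < sinh v" using assms by auto
  ultimately show ?thesis by (simp add: field_simps)
qed

lemma sinh_sq_diff_lower_bound:
  fixes v w :: real assumes "\<bar>w\<bar> \<le> v"
  shows "(v^2 - w^2) * sinh v * (cosh w)^2 \<le> v * cosh v * ((sinh v)^2 - (sinh w)^2)"
proof -
  define h where "h t = v * cosh v * ((sinh v)^2 - (sinh t)^2) - (v^2 - t^2) * sinh v * (cosh t)^2"
    for t
  have "h v \<le> h \<bar>w\<bar>"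
  proof (rule DERIV_nonpos_imp_nonincreasing[OF assms])
    fix t :: real assume t: "\<bar>w\<bar> \<le> t" "t \<le> v"
    define g where "g = t * sinh v * cosh t - v * cosh v * sinh t - (v^2 - t^2) * sinh v * sinh t"
    have "(h has_real_derivative 2 * cosh t * g) (at t)"
      unfolding h_def[abs_def] g_def
      by (rule derivative_eq_intros refl)+ (simp add: algebra_simps power2_eq_square)
    moreover have "g \<le> 0"
    proof (cases "t = 0")
      case False
      then have "0 < t" using t by simp
      have "t * cosh t * sinh v \<le> v * cosh v * sinh t"
        using mult_coth_mono_real[OF \<open>0 < t\<close> t(2)] .
      moreover have "0 \<le> (v^2 - t^2) * sinh v * sinh t"
        using t \<open>0 < t\<close> by (intro mult_nonneg_nonneg) (auto intro: power_mono)
      ultimately show ?thesis by (simp add: g_def algebra_simps)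
    qed (simp add: g_def)
    ultimately show "\<exists>d. (h has_real_derivative d) (at t) \<and> d \<le> 0"
      by (intro exI[of _ "2 * cosh t * g"]) (simp add: mult_nonneg_nonpos)
  qed
  then show ?thesis by (simp add: h_def power2_abs)
qed

lemma exp_add_minus_exp_diff: "exp (a + b) - exp (a - b) = 2 * exp a * sinh (b::real)"
  by (simp add: sinh_field_def exp_add exp_diff exp_minus field_simps)

lemma exp_add_plus_exp_diff: "exp (a + b) + exp (a - b) = 2 * exp a * cosh (b::real)"
  by (simp add: cosh_field_def exp_add exp_diff exp_minus field_simps)

lemma sinh_add_mult_sinh_diff: "sinh (v + w) * sinh (v - w) = (sinh v)^2 - (sinh (w::real))^2"
proof -
  have "sinh (v + w) * sinh (v - w) = (sinh v)^2 * (cosh w)^2 - (cosh v)^2 * (sinh w)^2"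
    unfolding sinh_add sinh_diff by (simp add: power2_eq_square algebra_simps)
  then show ?thesis by (simp add: cosh_square_eq algebra_simps)
qed

lemma AM_exp_sym: "AM (exp (m + 2 * v)) (exp (m - 2 * v)) = exp m * ((cosh v)^2 + (sinh v)^2)"
  using exp_add_plus_exp_diff[of m "2 * v"] by (simp add: AM_def cosh_double)

lemma LM_exp_sym:
  assumes "v \<noteq> 0"
  shows "LM (exp (m + 2 * v)) (exp (m - 2 * v)) = exp m * sinh v * cosh v / v"
  using exp_add_minus_exp_diff[of m "2 * v"] assms by (simp add: LM_def sinh_double)

lemma sqrt_diff_exp_sym:
  "(sqrt (exp (m + 2 * v)) - sqrt (exp (m - 2 * v)))^2 = 4 * exp m * (sinh v)^2"
proof -
  have sqrt_exp: "sqrt (exp a) = exp (a / 2)" for a :: real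
    by (rule real_sqrt_unique) (simp_all add: power2_eq_square flip: exp_add)
  have "sqrt (exp (m + 2 * v)) - sqrt (exp (m - 2 * v)) = 2 * exp (m / 2) * sinh v"
    using exp_add_minus_exp_diff[of "m / 2" v] by (simp add: sqrt_exp add_divide_distrib diff_divide_distrib)
  moreover have "(exp (m / 2))^2 = exp m" by (simp add: power2_eq_square flip: exp_add)
  ultimately show ?thesis by (simp add: power_mult_distrib)
qed

lemma WYD_exp_sym:
  assumes "v \<noteq> 0" "p \<noteq> 0" "p \<noteq> 1"
  shows "WYD p (exp (m + 2 * v)) (exp (m - 2 * v)) =
    exp m * (4 * p * (1 - p) * (sinh v)^2 * (cosh v)^2 / ((sinh v)^2 - (sinh ((2 * p - 1) * v))^2))"
proof -
  define w where "w = (2 * p - 1) * v"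
  have "exp (m + 2 * v) powr q - exp (m - 2 * v) powr q = 2 * exp (q * m) * sinh (q * 2 * v)"
    for q :: real
    using exp_add_minus_exp_diff[of "q * m" "q * 2 * v"] by (simp add: powr_def algebra_simps)
  note powr_diff = this[of p] this[of "1 - p"]
  have "p * 2 * v = v + w" "(1 - p) * 2 * v = v - w" by (simp_all add: w_def algebra_simps)
  moreover have "exp (p * m) * exp ((1 - p) * m) = exp m" by (simp flip: exp_add add: algebra_simps)
  ultimately have denominator:
    "(exp (m + 2 * v) powr p - exp (m - 2 * v) powr p) *
     (exp (m + 2 * v) powr (1 - p) - exp (m - 2 * v) powr (1 - p)) =
       4 * exp m * ((sinh v)^2 - (sinh w)^2)"
    unfolding powr_diff by (simp flip: sinh_add_mult_sinh_diff add: algebra_simps)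
  have numerator: "exp (m + 2 * v) - exp (m - 2 * v) = 4 * exp m * sinh v * cosh v"
    using exp_add_minus_exp_diff[of m "2 * v"] by (simp add: sinh_double)
  show ?thesis
    using assms unfolding WYD_def denominator numerator w_def [symmetric]
    by (cases "(sinh v)^2 = (sinh w)^2") (simp_all add: field_simps power2_eq_square)
qed

lemma hyperbolic_AM_bound:
  fixes p v :: real assumes "0 < v"
  shows "p * (1 - p) * (4 * (sinh v)^2) + sinh v * cosh v / v \<le> (cosh v)^2 + (sinh v)^2"
proof -
  have "p * (1 - p) = 1/4 - (p - 1/2)^2" by (simp add: power2_eq_square field_simps)
  then have "p * (1 - p) \<le> 1/4" by simp
  then have "p * (1 - p) * (4 * (sinh v)^2) \<le> 1/4 * (4 * (sinh v)^2)"
    by (rule mult_right_mono) simp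
  moreover have "sinh v * cosh v \<le> v * cosh v * cosh v"
    using sinh_le_mult_cosh_real[of v] assms by (simp add: mult_right_mono)
  then have "sinh v * cosh v / v \<le> (cosh v)^2"
    using assms by (simp add: divide_le_eq power2_eq_square algebra_simps)
  ultimately show ?thesis by linarith
qed

lemma hyperbolic_WYD_bound:
  fixes p v :: real assumes "0 < v" "0 < p" "p < 1"
  shows "4 * p * (1 - p) * (sinh v)^2 * (cosh v)^2 / ((sinh v)^2 - (sinh ((2 * p - 1) * v))^2)
    \<le> p * (1 - p) * (4 * (sinh v)^2) + sinh v * cosh v / v"
proof -
  define w where "w = (2 * p - 1) * v"
  define P where "P = p * (1 - p)"
  define D where "D = (sinh v)^2 - (sinh w)^2"
  have "\<bar>2 * p - 1\<bar> * v < 1 * v" using assms by (intro mult_strict_right_mono) auto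
  then have "\<bar>w\<bar> < v" using assms by (simp add: w_def abs_mult)
  then have "\<bar>sinh w\<bar> < sinh v" by (metis sinh_real_abs sinh_real_less_iff)
  then have "0 < D" unfolding D_def
    by (metis abs_ge_zero abs_less_iff diff_gt_0_iff_gt power2_abs power_strict_mono zero_less_numeral)
  have "0 < sinh v" using assms by simp
  have "4 * P * v^2 = v^2 - w^2" by (simp add: P_def w_def power2_eq_square algebra_simps)
  then have "4 * P * v^2 * sinh v * (cosh w)^2 \<le> v * cosh v * D"
    using sinh_sq_diff_lower_bound[of w v] \<open>\<bar>w\<bar> < v\<close> by (simp add: D_def)
  then have "v * (4 * P * v * sinh v * (cosh w)^2) \<le> v * (cosh v * D)"
    by (simp add: power2_eq_square algebra_simps)
  then have "4 * P * v * sinh v * (cosh w)^2 * sinh v \<le> cosh v * D * sinh v"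
    using assms \<open>0 < sinh v\<close> by (intro mult_right_mono) auto
  then have "4 * P * (sinh v)^2 * (cosh w)^2 / D \<le> sinh v * cosh v / v"
    using assms \<open>0 < D\<close> by (simp add: divide_le_eq le_divide_eq power2_eq_square algebra_simps)
  moreover have "(cosh v)^2 = D + (cosh w)^2" by (simp add: D_def cosh_square_eq)
  then have "4 * P * (sinh v)^2 * (cosh v)^2 / D = P * (4 * (sinh v)^2) + 4 * P * (sinh v)^2 * (cosh w)^2 / D"
    using \<open>0 < D\<close> by (simp add: field_simps)
  ultimately show ?thesis by (simp add: P_def D_def w_def mult.assoc)
qed

lemma WYD_bounds_exp_sym:
  fixes m v p :: real
  defines "x \<equiv> exp (m + 2 * v)" and "y \<equiv> exp (m - 2 * v)"
  assumes "0 < v" "0 \<le> p" "p \<le> 1"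
  shows "WYD p x y \<le> p * (1 - p) * (sqrt x - sqrt y)^2 + LM x y
       \<and> p * (1 - p) * (sqrt x - sqrt y)^2 + LM x y \<le> AM x y"
proof
  have "v \<noteq> 0" using \<open>0 < v\<close> by simp
  have middle: "p * (1 - p) * (sqrt x - sqrt y)^2 + LM x y =
      exp m * (p * (1 - p) * (4 * (sinh v)^2) + sinh v * cosh v / v)"
    unfolding x_def y_def sqrt_diff_exp_sym LM_exp_sym[OF \<open>v \<noteq> 0\<close>] by (simp add: algebra_simps)
  show "WYD p x y \<le> p * (1 - p) * (sqrt x - sqrt y)^2 + LM x y"
  proof (cases "p = 0 \<or> p = 1")
    case False
    then have "p \<noteq> 0" "p \<noteq> 1" "0 < p" "p < 1" using \<open>0 \<le> p\<close> \<open>p \<le> 1\<close> by auto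
    then show ?thesis
      unfolding middle unfolding x_def y_def WYD_exp_sym[OF \<open>v \<noteq> 0\<close> \<open>p \<noteq> 0\<close> \<open>p \<noteq> 1\<close>]
      using hyperbolic_WYD_bound[OF \<open>0 < v\<close>] by (intro mult_left_mono) auto
  qed (auto simp: WYD_def)
  show "p * (1 - p) * (sqrt x - sqrt y)^2 + LM x y \<le> AM x y"
    unfolding middle unfolding x_def y_def AM_exp_sym
    using hyperbolic_AM_bound[OF \<open>0 < v\<close>] by (intro mult_left_mono) auto
qed

lemma LM_commute: "LM x y = LM y x"
  by (simp add: LM_def minus_divide_divide[of "x - y" "ln x - ln y", symmetric])

lemma WYD_commute: "WYD p x y = WYD p y x"
proof -
  have "(x powr p - y powr p) * (x powr (1 - p) - y powr (1 - p)) =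
        (y powr p - x powr p) * (y powr (1 - p) - x powr (1 - p))"
    by (simp add: algebra_simps)
  then show ?thesis unfolding WYD_def LM_commute[of x y] by (simp add: power2_commute)
qed

lemma WYD_bounds_of_less:
  fixes x y p :: real
  assumes "0 < y" "y < x" "0 \<le> p" "p \<le> 1"
  shows "WYD p x y \<le> p * (1 - p) * (sqrt x - sqrt y)^2 + LM x y
       \<and> p * (1 - p) * (sqrt x - sqrt y)^2 + LM x y \<le> AM x y"
proof -
  define m where "m = (ln x + ln y) / 2"
  define v where "v = (ln x - ln y) / 4"
  have "x = exp (m + 2 * v)" "y = exp (m - 2 * v)"
    using assms by (simp_all add: m_def v_def field_simps)
  moreover have "0 < v" using assms by (simp add: v_def)
  ultimately show ?thesis using WYD_bounds_exp_sym[of v p m] assms by simp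
qed

theorem theorem2p1:
  fixes x y p :: real
  assumes "x > 0" and "y > 0" and "0 \<le> p" and "p \<le> 1"
  shows "WYD p x y \<le> p * (1 - p) * (sqrt x - sqrt y)^2 + LM x y
       \<and> p * (1 - p) * (sqrt x - sqrt y)^2 + LM x y \<le> AM x y"
proof (cases x y rule: linorder_cases)
  case less
  then show ?thesis
    using WYD_bounds_of_less[of x y p] assms
    by (simp add: WYD_commute[of p x] LM_commute[of x] AM_def power2_commute add.commute)
next
  case equal
  then show ?thesis by (simp add: WYD_def LM_def AM_def)
next
  case greater
  then show ?thesis using WYD_bounds_of_less assms by blast
qed

end
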